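(* Let $\mathcal{D}\subseteq\{0,1\}^m$ be nonempty and $c,d\in\mathbb{R}^m$ with $d^\top x>0$ for all $x\in\mathcal{D}$, and let $f(\delta):=\min_{x\in\mathcal{D}}(c-\delta d)^\top x$. Then the look-ahead Newton–Dinkelbach method (described in the context), applied to $f$ with any initial point $\delta^{(1)}$ and supergradient $g^{(1)}\in\partial f(\delta^{(1)})$ satisfying $f(\delta^{(1)})\le 0$ and $g^{(1)}<0$, terminates in $O(m\log m)$ iterations.
   Context: This is the linear fractional combinatorial optimization problem $\min\{c^\top x/d^\top x: x\in\mathcal{D}\}$, whose optimal value is the unique root of $f$. Value and supergradient oracles for $f$ are implemented by a linear optimization oracle over $\mathcal{D}$: for $\delta\in\mathbb{R}$ it returns some $x\in\operatorname{argmin}_{x\in\mathcal{D}}(c-\delta d)^\top x$, giving $f(\delta)=(c-\delta d)^\top x$ and the supergradient $-d^\top x\in\partial f(\delta)$. Here $\partial f(x_0):=\{g: f(x)\le f(x_0)+g(x-x_0)\ \forall x\}$. Look-ahead Newton–Dinkelbach method: input $\delta^{(1)}$, $g^{(1)}\in\partial f(\delta^{(1)})$ with $f(\delta^{(1)})\le0$, $g^{(1)}<0$. For $i=1,2,\dots$: if $f(\delta^{(i)})=0$, return $\delta^{(i)}$. Otherwise set $\delta:=\delta^{(i)}-f(\delta^{(i)})/g^{(i)}$ and query $g\in\partial f(\delta)$; if $f(\delta)=-\infty$, or $f(\delta)<0$ and $g\ge0$, return NO ROOT. Then set $\delta':=2\delta-\delta^{(i)}$ and query $g'\in\partial f(\delta')$;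 if $-\infty<f(\delta')<0$ and $g'<0$, replace $(\delta,g)$ by $(\delta',g')$. Set $\delta^{(i+1)}:=\delta$, $g^{(i+1)}:=g$. *)

theory Defs
  imports Complex_Main
begin

text \<open>Vectors in R^m are modelled as functions nat => real; only the
  coordinates i < m matter.  Points of {0,1}^m are 0/1 on indices < m and 0 elsewhere.\<close>

definition bin_cube :: "nat \<Rightarrow> (nat \<Rightarrow> real) set" where
  "bin_cube m = {x. (\<forall>i<m. x i = 0 \<or> x i = 1) \<and> (\<forall>i\<ge>m. x i = 0)}"

definition dotp :: "nat \<Rightarrow> (nat \<Rightarrow> real) \<Rightarrow> (nat \<Rightarrow> real) \<Rightarrow> real" where
  "dotp m a x = (\<Sum>i<m. a i * x i)"

definition fval :: "nat \<Rightarrow> (nat \<Rightarrow> real) \<Rightarrow> (nat \<Rightarrow> real) \<Rightarrow> (nat \<Rightarrow> real) set \<Rightarrow> real \<Rightarrow> real" where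
  "fval m c d D \<delta> = Min ((\<lambda>x. dotp m (\<lambda>i. c i - \<delta> * d i) x) ` D)"

definition supergrad :: "(real \<Rightarrow> real) \<Rightarrow> real \<Rightarrow> real \<Rightarrow> bool" where
  "supergrad f x0 g \<longleftrightarrow> (\<forall>x. f x \<le> f x0 + g * (x - x0))"

definition lin_argmin :: "nat \<Rightarrow> (nat \<Rightarrow> real) \<Rightarrow> (nat \<Rightarrow> real) \<Rightarrow> (nat \<Rightarrow> real) set \<Rightarrow> real \<Rightarrow> (nat \<Rightarrow> real) set" where
  "lin_argmin m c d D \<delta> = {x \<in> D. \<forall>y\<in>D. dotp m (\<lambda>i. c i - \<delta> * d i) x \<le> dotp m (\<lambda>i. c i - \<delta> * d i) y}"

text \<open>One iteration of the look-ahead Newton--Dinkelbach method, started from a state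
  (delta_i, g_i) with f(delta_i) \<noteq> 0.  The result is Some (delta_{i+1}, g_{i+1}) or
  None (= the method returns NO ROOT).  Supergradients are queried through the oracle:
  g = - d^T x for an oracle output x.  (f never takes the value -infinity here,
  since D is finite and nonempty.)\<close>
definition lanD_step ::
  "nat \<Rightarrow> (nat \<Rightarrow> real) \<Rightarrow> (nat \<Rightarrow> real) \<Rightarrow> (nat \<Rightarrow> real) set \<Rightarrow> real \<times> real \<Rightarrow> (real \<times> real) option \<Rightarrow> bool" where
  "lanD_step m c d D s r \<longleftrightarrow>
     (let f = fval m c d D; \<delta>i = fst s; gi = snd s; \<delta> = \<delta>i - f \<delta>i / gi in
      \<exists>x \<in> lin_argmin m c d D \<delta>.
        let g = - dotp m d x in
        if f \<delta> < 0 \<and> g \<ge> 0 then r = None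
        else (let \<delta>' = 2 * \<delta> - \<delta>i in
              \<exists>x' \<in> lin_argmin m c d D \<delta>'.
                let g' = - dotp m d x' in
                r = Some (if f \<delta>' < 0 \<and> g' < 0 then (\<delta>', g') else (\<delta>, g))))"

text \<open>A run: states k = state at iteration k+1 (states 0 = (delta^(1), g^(1))).
  Whenever the state at iteration k+1 is present and not a root, the next state arises by one step.\<close>
definition lanD_run ::
  "nat \<Rightarrow> (nat \<Rightarrow> real) \<Rightarrow> (nat \<Rightarrow> real) \<Rightarrow> (nat \<Rightarrow> real) set \<Rightarrow> real \<Rightarrow> real \<Rightarrow> (nat \<Rightarrow> (real \<times> real) option) \<Rightarrow> bool" where
  "lanD_run m c d D \<delta>1 g1 st \<longleftrightarrow>
     st 0 = Some (\<delta>1, g1) \<and>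
     (\<forall>k s. st k = Some s \<and> fval m c d D (fst s) \<noteq> 0 \<longrightarrow> lanD_step m c d D s (st (Suc k)))"

end

theory Submission
  imports Defs "HOL-Library.FuncSet"
begin

text \<open>f is concave, piecewise linear and strictly decreasing, with root the optimal ratio
  \<delta>* = min c^T x / d^T x; a Newton step whose slope comes from a minimizer x lands at
  the ratio c^T x / d^T x.  Hence in each iteration either the look-ahead is accepted and
  the slope d^T x more than halves, or it is rejected and the reduced cost
  (c - \<delta>* d)^T x of the current minimizer is at most half that of the previous one.  Both
  quantities are nonincreasing along the run, and by Goemans' lemma a linear functional can halve
  at most O(m log m) times along 0/1 vectors: any n halving vectors satisfy 2^n \<le> (n+1)^m,
  since each subset is determined by the sum of its values, which only depends on the m column
  counts.\<close>

lemma sum_above_lt_if_halving: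
  fixes a :: "nat \<Rightarrow> real"
  assumes "finite I" "j \<in> I" "\<forall>p\<in>I. 0 < a p" "\<forall>p\<in>I. \<forall>q\<in>I. p < q \<longrightarrow> a q \<le> a p / 2"
  shows "sum a {q\<in>I. j < q} < a j"
  using assms(2)
proof (induction "card {q\<in>I. j < q}" arbitrary: j rule: less_induct)
  case less
  let ?J = "{q\<in>I. j < q}"
  show ?case
  proof (cases "?J = {}")
    case True
    then show ?thesis using less.prems assms(3) by (simp only: True) simp
  next
    case False
    define j' where "j' = Min ?J"
    have j': "j' \<in> ?J" using False assms(1) unfolding j'_def by (intro Min_in) auto
    have split: "?J = insert j' {q\<in>I. j' < q}"
      using j' assms(1) unfolding j'_def by (auto simp: order.strict_iff_order intro: Min_le)
    have "card {q\<in>I. j' < q} < card ?J"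
      using assms(1) j' by (intro psubset_card_mono) auto
    then have "sum a {q\<in>I. j' < q} < a j'" using less.hyps j' by blast
    moreover have "sum a ?J = a j' + sum a {q\<in>I. j' < q}"
      using assms(1) by (subst split) simp
    moreover have "a j' \<le> a j / 2" using assms(4) less.prems j' by blast
    ultimately show ?thesis by linarith
  qed
qed

lemma sum_less_if_halving:
  fixes a :: "nat \<Rightarrow> real"
  assumes "finite I" "\<forall>p\<in>I. 0 < a p" "\<forall>p\<in>I. \<forall>q\<in>I. p < q \<longrightarrow> a q \<le> a p / 2"
    and "S \<subseteq> I" "T \<subseteq> I" "j \<in> S - T" "\<forall>q\<in>T - S. j < q"
  shows "sum a T < sum a S"
proof -
  have fin: "finite S" "finite T" using assms(1,4,5) finite_subset by auto
  have nonneg: "\<forall>q\<in>I. 0 \<le> a q" using assms(2) by (simp add: less_imp_le)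
  have "sum a (T - S) \<le> sum a {q\<in>I. j < q}"
    using assms(1,5,7) nonneg by (intro sum_mono2) auto
  also have "\<dots> < a j"
    using assms(4,6) by (intro sum_above_lt_if_halving[OF assms(1) _ assms(2,3)]) auto
  also have "\<dots> \<le> sum a (S - T)"
    using assms(4,6) fin(1) nonneg by (intro member_le_sum) auto
  finally show ?thesis
    using sum.Int_Diff[OF fin(1), where g = a and B = T] sum.Int_Diff[OF fin(2), where g = a and B = S]
    by (simp add: Int_commute)
qed

lemma inj_on_sum_if_halving:
  fixes a :: "nat \<Rightarrow> real"
  assumes "finite I" "\<forall>p\<in>I. 0 < a p" "\<forall>p\<in>I. \<forall>q\<in>I. p < q \<longrightarrow> a q \<le> a p / 2"
  shows "inj_on (sum a) (Pow I)"
proof -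
  have fin: "finite (S - T \<union> (T - S))" if "S \<subseteq> I" "T \<subseteq> I" for S T
    using that assms(1) by (meson finite_Diff finite_UnI finite_subset)
  have less: "sum a T < sum a S"
    if S: "S \<subseteq> I" and T: "T \<subseteq> I" and min: "Min (S - T \<union> (T - S)) \<in> S - T" for S T
  proof -
    have "\<forall>q\<in>T - S. Min (S - T \<union> (T - S)) < q"
      using fin[OF S T] min by (metis DiffD1 DiffD2 Min_le UnCI order_le_neq_trans)
    then show ?thesis using S T min by (intro sum_less_if_halving[OF assms])
  qed
  show ?thesis
  proof (rule inj_onI, rule ccontr)
    fix S T assume S: "S \<in> Pow I" and T: "T \<in> Pow I" and "sum a S = sum a T" "S \<noteq> T"
    have "Min (S - T \<union> (T - S)) \<in> S - T \<union> (T - S)"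
      using fin[of S T] S T \<open>S \<noteq> T\<close> by (intro Min_in) auto
    then show False
      using less[of S T] less[of T S] S T \<open>sum a S = sum a T\<close> by (auto simp: Un_commute)
  qed
qed

lemma finite_bin_cube: "finite (bin_cube m)"
  by (rule finite_subset[OF _ finite_set_of_finite_funs[of "{..<m}" "{0, 1}" 0]])
    (auto simp: bin_cube_def)

lemma sum_dotp_eq_card:
  assumes "finite S" "\<forall>p\<in>S. y p \<in> bin_cube m"
  shows "(\<Sum>p\<in>S. dotp m w (y p)) = (\<Sum>i<m. w i * real (card {p\<in>S. y p i = 1}))"
proof -
  have "w i * y p i = (if y p i = 1 then w i else 0)" if "p \<in> S" "i < m" for p i
    using assms(2) that unfolding bin_cube_def by auto
  then have "(\<Sum>p\<in>S. w i * y p i) = w i * real (card {p\<in>S. y p i = 1})" if "i < m" for i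
    using assms(1) that by (simp add: sum.If_cases Int_def)
  then show ?thesis
    unfolding dotp_def by (subst sum.swap) simp
qed

lemma two_pow_card_le_if_halving:
  fixes I :: "nat set"
  assumes "finite I" "\<forall>p\<in>I. y p \<in> bin_cube m" "\<forall>p\<in>I. 0 < dotp m w (y p)"
    and "\<forall>p\<in>I. \<forall>q\<in>I. p < q \<longrightarrow> dotp m w (y q) \<le> dotp m w (y p) / 2"
  shows "2 ^ card I \<le> (card I + 1) ^ m"
proof -
  define counts where "counts S = (\<lambda>i\<in>{..<m}. card {p\<in>S. y p i = 1})" for S
  have "inj_on counts (Pow I)"
  proof (rule inj_onI)
    fix S T assume S: "S \<in> Pow I" and T: "T \<in> Pow I" and eq: "counts S = counts T"
    have counts_eq: "card {p\<in>S. y p i = 1} = card {p\<in>T. y p i = 1}" if "i < m" for i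
      using fun_cong[OF eq, of i] that unfolding counts_def by simp
    have fin: "finite S" "finite T" using S T assms(1) by (auto intro: finite_subset)
    have "(\<Sum>p\<in>S. dotp m w (y p)) = (\<Sum>i<m. w i * real (card {p\<in>S. y p i = 1}))"
      using fin(1) S assms(2) by (intro sum_dotp_eq_card) auto
    also have "\<dots> = (\<Sum>i<m. w i * real (card {p\<in>T. y p i = 1}))"
      using counts_eq by (intro sum.cong) auto
    also have "\<dots> = (\<Sum>p\<in>T. dotp m w (y p))"
      using fin(2) T assms(2) by (intro sum_dotp_eq_card[symmetric]) auto
    finally have "(\<Sum>p\<in>S. dotp m w (y p)) = (\<Sum>p\<in>T. dotp m w (y p))" .
    then show "S = T"
      using inj_on_sum_if_halving[of I "\<lambda>p. dotp m w (y p)"] assms S T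
      by (auto dest: inj_onD)
  qed
  moreover have "counts ` Pow I \<subseteq> {..<m} \<rightarrow>\<^sub>E {0..card I}"
  proof (rule image_subsetI)
    fix S assume "S \<in> Pow I"
    then show "counts S \<in> {..<m} \<rightarrow>\<^sub>E {0..card I}"
      using assms(1) unfolding counts_def restrict_PiE_iff by (auto intro!: card_mono)
  qed
  ultimately have "card (Pow I) \<le> card ({..<m} \<rightarrow>\<^sub>E {0..card I})"
    by (intro card_inj_on_le) (auto simp: finite_PiE)
  then show ?thesis using assms(1) by (simp add: card_Pow card_PiE)
qed

lemma le_m_ln_m_if_two_pow_le:
  fixes n m :: nat
  assumes "2 ^ n \<le> (n + 1) ^ m" "0 < m"
  shows "real n \<le> 8 * (real m * ln (real m) + 1)"
proof -
  define x where "x = real m"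
  define y where "y = x * ln x"
  have x: "0 < x" using assms(2) unfolding x_def by simp
  have "real (2 ^ n) \<le> real ((n + 1) ^ m)"
    using assms(1) by (simp only: of_nat_le_iff)
  then have "ln ((2::real) ^ n) \<le> ln ((real n + 1) ^ m)"
    by (simp add: add.commute)
  then have "real n * ln 2 \<le> x * ln (real n + 1)"
    unfolding x_def by (simp add: ln_realpow)
  moreover have "1 \<le> 2 * ln (2::real)"
    using ln_le_minus_one[of "1 / 2 :: real"] by (simp add: ln_div)
  then have "real n \<le> 2 * (real n * ln 2)"
    using mult_left_mono[of 1 "2 * ln 2" "real n"] by simp
  moreover have "4 * (x * ln (real n + 1)) \<le> 4 * x + 4 * y + real n + 1"
  proof -
    have "ln ((real n + 1) / (4 * x)) \<le> (real n + 1) / (4 * x) - 1"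
      using x by (intro ln_le_minus_one) simp
    moreover have "ln (4 * x) \<le> 2 + ln x"
      using x ln_2_less_1 ln_mult[of 2 2] by (simp add: ln_mult)
    ultimately have "ln (real n + 1) \<le> 1 + ln x + (real n + 1) / (4 * x)"
      using x by (simp add: ln_div ln_mult)
    then have "4 * x * ln (real n + 1) \<le> 4 * x * (1 + ln x + (real n + 1) / (4 * x))"
      using x by (intro mult_left_mono) auto
    also have "\<dots> = 4 * x + 4 * y + real n + 1"
      using x unfolding y_def by (simp add: field_simps)
    finally show ?thesis by (simp add: mult.assoc)
  qed
  moreover have "x \<le> y + 1"
    using ln_le_minus_one[of "1 / x"] x unfolding y_def by (simp add: ln_div field_simps)
  moreover have "0 \<le> y"
    using assms(2) unfolding x_def y_def by simp
  ultimately have "real n \<le> 8 * (y + 1)"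
    by argo
  then show ?thesis
    unfolding x_def y_def .
qed

lemma antimono_interval_if_Suc:
  fixes a :: "nat \<Rightarrow> 'a :: preorder"
  assumes "\<And>k. l \<le> k \<Longrightarrow> k < n \<Longrightarrow> a (Suc k) \<le> a k" "l \<le> p" "p \<le> q" "q \<le> n"
  shows "a q \<le> a p"
  using assms(3,4)
proof (induction q rule: dec_induct)
  case (step k)
  have "a (Suc k) \<le> a k"
    using assms(1)[of k] assms(2) step.hyps step.prems by simp
  also have "a k \<le> a p"
    using step.IH step.prems by simp
  finally show ?case .
qed simp

lemma card_halving_steps_le:
  assumes "0 < m" "\<forall>p\<in>{l..n}. y p \<in> bin_cube m \<and> 0 < dotp m w (y p)"
    and "\<forall>p\<in>{l..<n}. dotp m w (y (Suc p)) \<le> dotp m w (y p)"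
  shows "real (card {p\<in>{l..<n}. dotp m w (y (Suc p)) \<le> dotp m w (y p) / 2})
           \<le> 8 * (real m * ln (real m) + 1)"
proof (rule le_m_ln_m_if_two_pow_le[OF _ assms(1)], rule two_pow_card_le_if_halving)
  let ?a = "\<lambda>p. dotp m w (y p)"
  show "\<forall>p\<in>{p\<in>{l..<n}. ?a (Suc p) \<le> ?a p / 2}. \<forall>q\<in>{p\<in>{l..<n}. ?a (Suc p) \<le> ?a p / 2}.
          p < q \<longrightarrow> ?a (Suc q) \<le> ?a (Suc p) / 2"
  proof (intro ballI impI)
    fix p q assume p: "p \<in> {p\<in>{l..<n}. ?a (Suc p) \<le> ?a p / 2}"
      and q: "q \<in> {p\<in>{l..<n}. ?a (Suc p) \<le> ?a p / 2}" and "p < q"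
    have "?a q \<le> ?a (Suc p)"
      by (rule antimono_interval_if_Suc[where a = ?a and l = l and n = n])
        (use p q \<open>p < q\<close> assms(3) in auto)
    then show "?a (Suc q) \<le> ?a (Suc p) / 2" using q by simp
  qed
qed (use assms(2) in auto)

lemma dotp_diff_scaled: "dotp m (\<lambda>i. c i - \<delta> * d i) x = dotp m c x - \<delta> * dotp m d x"
  unfolding dotp_def by (simp add: sum_subtractf sum_distrib_left algebra_simps)

lemma fval_newton_point_nonpos:
  assumes "supergrad f \<delta> g" "g \<noteq> 0"
  shows "f (\<delta> - f \<delta> / g) \<le> 0"
proof -
  have "f (\<delta> - f \<delta> / g) \<le> f \<delta> + g * ((\<delta> - f \<delta> / g) - \<delta>)"
    using assms(1) unfolding supergrad_def by blast
  then show ?thesis using assms(2) by simp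
qed

text \<open>The point \<delta> - 2 * (f \<delta> / g) is the look-ahead point, twice as far as the Newton step.\<close>

lemma look_ahead_slope_halves:
  fixes f :: "real \<Rightarrow> real"
  assumes "supergrad f (\<delta> - 2 * (f \<delta> / g)) g'" "f (\<delta> - 2 * (f \<delta> / g)) < 0"
    and "f \<delta> < 0" "g < 0"
  shows "g < 2 * g'"
proof -
  define t where "t = f \<delta> / g"
  have t: "0 < t" using assms(3,4) unfolding t_def by (simp add: divide_neg_neg)
  have "g * t = f \<delta>" using assms(4) unfolding t_def by simp
  also have "\<dots> \<le> f (\<delta> - 2 * t) + g' * (\<delta> - (\<delta> - 2 * t))"
    using assms(1) unfolding supergrad_def t_def by blast
  also have "\<dots> < (2 * g') * t" using assms(2) unfolding t_def[symmetric] by simp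
  finally show ?thesis using t by simp
qed

locale lin_frac_problem =
  fixes m :: nat and c d :: "nat \<Rightarrow> real" and D :: "(nat \<Rightarrow> real) set"
  assumes D_subset: "D \<subseteq> bin_cube m" and D_nonempty: "D \<noteq> {}"
    and denom_pos: "\<And>x. x \<in> D \<Longrightarrow> 0 < dotp m d x"
begin

abbreviation f :: "real \<Rightarrow> real" where "f \<equiv> fval m c d D"
abbreviation minimizers :: "real \<Rightarrow> (nat \<Rightarrow> real) set" where "minimizers \<equiv> lin_argmin m c d D"

definition ratio :: "(nat \<Rightarrow> real) \<Rightarrow> real" where
  "ratio x = dotp m c x / dotp m d x"

definition opt_ratio :: real where
  "opt_ratio = Min (ratio ` D)"

definition reduced_cost :: "(nat \<Rightarrow> real) \<Rightarrow> real" where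
  "reduced_cost x = dotp m (\<lambda>i. c i - opt_ratio * d i) x"

lemma finite_D: "finite D"
  using D_subset finite_bin_cube by (rule finite_subset)

lemma dim_pos: "0 < m"
proof -
  obtain x where "x \<in> D" using D_nonempty by blast
  then show ?thesis using denom_pos[of x] by (cases "m = 0") (auto simp: dotp_def)
qed

lemma fval_le: "x \<in> D \<Longrightarrow> f \<delta> \<le> dotp m c x - \<delta> * dotp m d x"
  unfolding fval_def dotp_diff_scaled[symmetric] using finite_D by (intro Min_le) auto

lemma fval_attained: "\<exists>x\<in>D. f \<delta> = dotp m c x - \<delta> * dotp m d x"
proof -
  have "f \<delta> \<in> (\<lambda>x. dotp m (\<lambda>i. c i - \<delta> * d i) x) ` D"
    unfolding fval_def using finite_D D_nonempty by (intro Min_in) auto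
  then show ?thesis by (auto simp: dotp_diff_scaled)
qed

lemma minimizers_subset: "minimizers \<delta> \<subseteq> D"
  unfolding lin_argmin_def by auto

lemma fval_minimizer:
  assumes "x \<in> minimizers \<delta>"
  shows "f \<delta> = dotp m c x - \<delta> * dotp m d x"
proof -
  obtain y where y: "y \<in> D" "f \<delta> = dotp m c y - \<delta> * dotp m d y"
    using fval_attained by blast
  have "x \<in> D" and "dotp m c x - \<delta> * dotp m d x \<le> dotp m c y - \<delta> * dotp m d y"
    using assms y(1) unfolding lin_argmin_def dotp_diff_scaled by auto
  then show ?thesis using fval_le[of x \<delta>] y(2) by linarith
qed

lemma supergrad_minimizer:
  assumes "x \<in> minimizers \<delta>"
  shows "supergrad f \<delta> (- dotp m d x)"
  unfolding supergrad_def
proof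
  fix \<delta>'
  have "f \<delta>' \<le> dotp m c x - \<delta>' * dotp m d x"
    using assms minimizers_subset by (intro fval_le) auto
  then show "f \<delta>' \<le> f \<delta> + - dotp m d x * (\<delta>' - \<delta>)"
    using fval_minimizer[OF assms] by (simp add: algebra_simps)
qed

lemma newton_point_minimizer:
  assumes "x \<in> minimizers \<delta>"
  shows "\<delta> - f \<delta> / (- dotp m d x) = ratio x"
proof -
  have "0 < dotp m d x" using assms minimizers_subset denom_pos by blast
  then show ?thesis using fval_minimizer[OF assms] unfolding ratio_def by (simp add: field_simps)
qed

lemma ratio_less_if_fval_neg:
  assumes "x \<in> minimizers \<delta>" "f \<delta> < 0"
  shows "ratio x < \<delta>"
proof -
  have "0 < dotp m d x" using assms(1) minimizers_subset denom_pos by blast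
  with assms(2) have "f \<delta> / dotp m d x < 0" by (rule divide_neg_pos)
  moreover have "\<delta> + f \<delta> / dotp m d x = ratio x"
    using newton_point_minimizer[OF assms(1)] by simp
  ultimately show ?thesis by linarith
qed

lemma opt_ratio_le_ratio: "x \<in> D \<Longrightarrow> opt_ratio \<le> ratio x"
  unfolding opt_ratio_def using finite_D by simp

lemma fval_opt_ratio: "f opt_ratio = 0"
proof -
  obtain x where x: "x \<in> D" "opt_ratio = ratio x"
    using finite_D D_nonempty unfolding opt_ratio_def by (metis Min_in finite_imageI image_iff image_is_empty)
  have "f opt_ratio \<le> 0"
    using fval_le[OF x(1), of opt_ratio] x(2) denom_pos[OF x(1)] unfolding ratio_def by simp
  moreover have "0 \<le> dotp m c y - opt_ratio * dotp m d y" if "y \<in> D" for y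
    using opt_ratio_le_ratio[OF that] denom_pos[OF that] unfolding ratio_def by (simp add: field_simps)
  ultimately show ?thesis using fval_attained[of opt_ratio] by force
qed

lemma fval_strict_antimono:
  assumes "\<delta> < \<delta>'"
  shows "f \<delta>' < f \<delta>"
proof -
  obtain x where x: "x \<in> D" "f \<delta> = dotp m c x - \<delta> * dotp m d x"
    using fval_attained by blast
  have "\<delta> * dotp m d x < \<delta>' * dotp m d x"
    using assms denom_pos[OF x(1)] by simp
  then show ?thesis using fval_le[OF x(1), of \<delta>'] x(2) by linarith
qed

lemma fval_neg_iff: "f \<delta> < 0 \<longleftrightarrow> opt_ratio < \<delta>"
  using fval_strict_antimono[of opt_ratio \<delta>] fval_strict_antimono[of \<delta> opt_ratio] fval_opt_ratio
  by (cases \<delta> opt_ratio rule: linorder_cases) auto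

lemma reduced_cost_eq: "x \<in> D \<Longrightarrow> reduced_cost x = dotp m d x * (ratio x - opt_ratio)"
  using denom_pos[of x] unfolding reduced_cost_def dotp_diff_scaled ratio_def
  by (simp add: field_simps)

lemma minimizers_antimono:
  assumes x: "x \<in> minimizers \<delta>" and y: "y \<in> minimizers \<delta>'" and "\<delta>' < \<delta>"
  shows "dotp m d y \<le> dotp m d x"
    and "opt_ratio \<le> \<delta>' \<Longrightarrow> reduced_cost y \<le> reduced_cost x"
proof -
  have xy: "x \<in> D" "y \<in> D" using x y minimizers_subset by auto
  have opt_x: "dotp m c x - \<delta> * dotp m d x \<le> dotp m c y - \<delta> * dotp m d y"
    using fval_minimizer[OF x] fval_le[OF xy(2), of \<delta>] by linarith
  have opt_y: "dotp m c y - \<delta>' * dotp m d y \<le> dotp m c x - \<delta>' * dotp m d x"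
    using fval_minimizer[OF y] fval_le[OF xy(1), of \<delta>'] by linarith
  have "(\<delta> - \<delta>') * (dotp m d y - dotp m d x) \<le> 0"
    using opt_x opt_y by (simp add: algebra_simps)
  then show le: "dotp m d y \<le> dotp m d x"
    using \<open>\<delta>' < \<delta>\<close> by (simp add: mult_le_0_iff)
  assume "opt_ratio \<le> \<delta>'"
  then have "0 \<le> (\<delta>' - opt_ratio) * (dotp m d x - dotp m d y)" using le by simp
  then show "reduced_cost y \<le> reduced_cost x"
    using opt_y unfolding reduced_cost_def dotp_diff_scaled by (simp add: algebra_simps)
qed

lemma reduced_cost_halves:
  assumes "x \<in> D" "y \<in> D" "dotp m d y \<le> dotp m d x" "2 * ratio y - opt_ratio \<le> ratio x"
  shows "reduced_cost y \<le> reduced_cost x / 2"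
proof -
  have "reduced_cost y = dotp m d y * (ratio y - opt_ratio)"
    using assms(2) by (rule reduced_cost_eq)
  also have "\<dots> \<le> dotp m d y * ((ratio x - opt_ratio) / 2)"
    using assms(2,4) denom_pos by (intro mult_left_mono) (auto simp: less_imp_le)
  also have "\<dots> \<le> dotp m d x * ((ratio x - opt_ratio) / 2)"
    using assms(1,3) opt_ratio_le_ratio by (intro mult_right_mono) auto
  also have "\<dots> = reduced_cost x / 2"
    using assms(1) by (simp add: reduced_cost_eq)
  finally show ?thesis .
qed

text \<open>The two disjuncts are the accepted and the rejected look-ahead.\<close>

lemma lanD_step_SomeE:
  assumes "f \<delta> < 0" "g < 0" "supergrad f \<delta> g" "lanD_step m c d D (\<delta>, g) r"
  obtains \<delta>' x' where "r = Some (\<delta>', - dotp m d x')" "x' \<in> minimizers \<delta>'" "f \<delta>' \<le> 0"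
    "\<delta>' \<le> \<delta> - f \<delta> / g" "g < - 2 * dotp m d x' \<or> 2 * (\<delta> - f \<delta> / g) - \<delta> \<le> opt_ratio"
proof -
  define \<nu> where "\<nu> = \<delta> - f \<delta> / g"
  have f_\<nu>: "f \<nu> \<le> 0" unfolding \<nu>_def using assms(2,3) by (intro fval_newton_point_nonpos) auto
  have \<nu>: "\<nu> < \<delta>" unfolding \<nu>_def using assms(1,2) by (simp add: divide_neg_neg)
  obtain x where x: "x \<in> minimizers \<nu>" and
    rest: "if f \<nu> < 0 \<and> 0 \<le> - dotp m d x then r = None
       else (\<exists>x'\<in>minimizers (2 * \<nu> - \<delta>).
               r = Some (if f (2 * \<nu> - \<delta>) < 0 \<and> - dotp m d x' < 0
                         then (2 * \<nu> - \<delta>, - dotp m d x') else (\<nu>, - dotp m d x)))"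
    using assms(4) unfolding lanD_step_def Let_def fst_conv snd_conv \<nu>_def by blast
  have "0 < dotp m d x" using x minimizers_subset denom_pos by blast
  then obtain x' where x': "x' \<in> minimizers (2 * \<nu> - \<delta>)" and
    r: "r = Some (if f (2 * \<nu> - \<delta>) < 0 \<and> - dotp m d x' < 0
                  then (2 * \<nu> - \<delta>, - dotp m d x') else (\<nu>, - dotp m d x))"
    using rest by auto
  have "0 < dotp m d x'" using x' minimizers_subset denom_pos by blast
  show thesis
  proof (cases "f (2 * \<nu> - \<delta>) < 0")
    case True
    have look_ahead: "2 * \<nu> - \<delta> = \<delta> - 2 * (f \<delta> / g)" unfolding \<nu>_def by simp
    have "g < 2 * - dotp m d x'"
      using supergrad_minimizer[OF x'] True unfolding look_ahead
      by (intro look_ahead_slope_halves[of f \<delta> g] assms(1,2))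
    then show thesis
      using that[of "2 * \<nu> - \<delta>" x'] r True x' \<nu> \<open>0 < dotp m d x'\<close> unfolding \<nu>_def by auto
  next
    case False
    then show thesis
      using that[of \<nu> x] r x f_\<nu> fval_neg_iff unfolding \<nu>_def by auto
  qed
qed

text \<open>A trajectory records iterations 1 to N of the method: X p is the minimizer whose slope
  is the p-th supergradient, so that ratio (X p) is the p-th Newton point, and the disjunction is
  the outcome of the look-ahead test.\<close>

definition trajectory :: "nat \<Rightarrow> (nat \<Rightarrow> real) \<Rightarrow> (nat \<Rightarrow> nat \<Rightarrow> real) \<Rightarrow> bool" where
  "trajectory N \<delta> X \<longleftrightarrow>
     (\<forall>p. 0 < p \<and> p \<le> N \<longrightarrow> X p \<in> minimizers (\<delta> p) \<and> opt_ratio < \<delta> p) \<and>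
     (\<forall>p. 0 < p \<and> p < N \<longrightarrow> \<delta> (Suc p) \<le> ratio (X p) \<and>
        (dotp m d (X (Suc p)) \<le> dotp m d (X p) / 2 \<or> 2 * ratio (X p) - \<delta> p \<le> opt_ratio))"

lemma trajectoryD:
  assumes "trajectory N \<delta> X"
  shows "\<And>p. 0 < p \<Longrightarrow> p \<le> N \<Longrightarrow> X p \<in> minimizers (\<delta> p)"
    and "\<And>p. 0 < p \<Longrightarrow> p \<le> N \<Longrightarrow> opt_ratio < \<delta> p"
    and "\<And>p. 0 < p \<Longrightarrow> p < N \<Longrightarrow> \<delta> (Suc p) \<le> ratio (X p)"
    and "\<And>p. 0 < p \<Longrightarrow> p < N \<Longrightarrow>
      dotp m d (X (Suc p)) \<le> dotp m d (X p) / 2 \<or> 2 * ratio (X p) - \<delta> p \<le> opt_ratio"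
  using assms unfolding trajectory_def by auto

lemma trajectory_monotone:
  assumes "trajectory N \<delta> X" "0 < p" "p < N"
  shows "dotp m d (X (Suc p)) \<le> dotp m d (X p)"
    and "reduced_cost (X (Suc p)) \<le> reduced_cost (X p)"
    and "0 < reduced_cost (X p)"
proof -
  note X = trajectoryD(1,2)[OF assms(1), of p] and X' = trajectoryD(1,2)[OF assms(1), of "Suc p"]
    and next_le = trajectoryD(3)[OF assms]
  have "ratio (X p) < \<delta> p"
    using X assms(2,3) by (intro ratio_less_if_fval_neg) (auto simp: fval_neg_iff)
  then have descent: "\<delta> (Suc p) < \<delta> p" using next_le by linarith
  show "dotp m d (X (Suc p)) \<le> dotp m d (X p)"
    using X(1) X'(1) descent assms(2,3) by (intro minimizers_antimono(1)) auto
  show "reduced_cost (X (Suc p)) \<le> reduced_cost (X p)"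
    using X(1) X'(1) descent X'(2) assms(2,3) by (intro minimizers_antimono(2)) auto
  have "X p \<in> D" using X(1) assms(2,3) minimizers_subset by auto
  moreover have "opt_ratio < ratio (X p)" using X'(2) next_le assms(3) by fastforce
  ultimately show "0 < reduced_cost (X p)" using reduced_cost_eq denom_pos by simp
qed

text \<open>The reduced cost is the slope times the gap ratio - opt_ratio of the Newton point.  A
  rejected look-ahead at p makes this gap at most half of \<delta> p - opt_ratio, which is at most the
  gap of the previous Newton point.\<close>

lemma trajectory_halving:
  assumes "trajectory N \<delta> X" "1 < p" "p < N"
  shows "dotp m d (X (Suc p)) \<le> dotp m d (X p) / 2 \<or>
    reduced_cost (X p) \<le> reduced_cost (X (p - 1)) / 2"
proof (cases "2 * ratio (X p) - \<delta> p \<le> opt_ratio")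
  case True
  have "X q \<in> D" if "0 < q" "q \<le> N" for q
    using trajectoryD(1)[OF assms(1) that] minimizers_subset by blast
  then have "X p \<in> D" "X (p - 1) \<in> D" using assms(2,3) by auto
  moreover have "\<delta> p \<le> ratio (X (p - 1))"
    using trajectoryD(3)[OF assms(1), of "p - 1"] assms(2,3) by simp
  moreover have "dotp m d (X p) \<le> dotp m d (X (p - 1))"
    using trajectory_monotone(1)[OF assms(1), of "p - 1"] assms(2,3) by simp
  ultimately have "reduced_cost (X p) \<le> reduced_cost (X (p - 1)) / 2"
    using True by (intro reduced_cost_halves) auto
  then show ?thesis ..
next
  case False
  then show ?thesis using trajectoryD(4)[OF assms(1), of p] assms(2,3) by auto
qed

lemma trajectory_length_bound:
  assumes "trajectory N \<delta> X"
  shows "real N \<le> 16 * (real m * ln (real m) + 1) + 2"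
proof -
  have X_cube: "X p \<in> bin_cube m" and d_pos: "0 < dotp m d (X p)" if "0 < p" "p \<le> N" for p
    using trajectoryD(1)[OF assms that] minimizers_subset D_subset denom_pos by blast+
  define B where "B = {p\<in>{1..<N}. dotp m d (X (Suc p)) \<le> dotp m d (X p) / 2}"
  define H where "H = {p\<in>{1..<N - 1}. reduced_cost (X (Suc p)) \<le> reduced_cost (X p) / 2}"
  have cover: "{2..<N} \<subseteq> B \<union> Suc ` H"
  proof
    fix p assume p: "p \<in> {2..<N}"
    then have "p \<in> B \<or> p - 1 \<in> H"
      using trajectory_halving[OF assms, of p] unfolding B_def H_def by auto
    then show "p \<in> B \<union> Suc ` H" using p by (auto simp: image_iff intro: bexI[of _ "p - 1"])
  qed
  have "N - 2 \<le> card (B \<union> Suc ` H)"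
    using card_mono[OF _ cover] unfolding B_def H_def by simp
  also have "\<dots> \<le> card B + card H"
    using card_Un_le[of B "Suc ` H"] card_image_le[of H Suc] unfolding H_def by simp
  finally have "real N \<le> real (card B) + real (card H) + 2"
    by linarith
  moreover have "real (card B) \<le> 8 * (real m * ln (real m) + 1)"
    unfolding B_def using X_cube d_pos trajectory_monotone(1)[OF assms]
    by (intro card_halving_steps_le dim_pos) auto
  moreover have "real (card H) \<le> 8 * (real m * ln (real m) + 1)"
    unfolding H_def reduced_cost_def using X_cube trajectory_monotone(2,3)[OF assms]
    by (intro card_halving_steps_le dim_pos) (auto simp: reduced_cost_def)
  ultimately show ?thesis by linarith
qed

end

locale lanD_execution = lin_frac_problem +
  fixes \<delta>1 g1 :: real and st :: "nat \<Rightarrow> (real \<times> real) option"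
  assumes run: "lanD_run m c d D \<delta>1 g1 st"
    and start_nonpos: "f \<delta>1 \<le> 0" and start_supergrad: "supergrad f \<delta>1 g1" and start_slope: "g1 < 0"
begin

definition active_upto :: "nat \<Rightarrow> bool" where
  "active_upto n \<longleftrightarrow> (\<forall>p\<le>n. \<exists>s. st p = Some s \<and> f (fst s) \<noteq> 0)"

lemma run_step_SomeE:
  assumes "st p = Some (\<delta>, g)" "f \<delta> < 0" "g < 0" "supergrad f \<delta> g"
  obtains \<delta>' x' where "st (Suc p) = Some (\<delta>', - dotp m d x')" "x' \<in> minimizers \<delta>'" "f \<delta>' \<le> 0"
    "\<delta>' \<le> \<delta> - f \<delta> / g" "g < - 2 * dotp m d x' \<or> 2 * (\<delta> - f \<delta> / g) - \<delta> \<le> opt_ratio"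
proof (rule lanD_step_SomeE[OF assms(2-4)])
  show "lanD_step m c d D (\<delta>, g) (st (Suc p))"
    using run assms(1,2) unfolding lanD_run_def by fastforce
qed (rule that)

lemma active_state:
  assumes "active_upto n" "p \<le> n"
  shows "\<exists>\<delta> g. st p = Some (\<delta>, g) \<and> f \<delta> < 0 \<and> g < 0 \<and> supergrad f \<delta> g \<and>
           (0 < p \<longrightarrow> (\<exists>x\<in>minimizers \<delta>. g = - dotp m d x))"
  using assms(2)
proof (induction p)
  case 0
  have "st 0 = Some (\<delta>1, g1)" using run unfolding lanD_run_def by simp
  moreover from this have "f \<delta>1 \<noteq> 0" using assms(1) unfolding active_upto_def by fastforce
  ultimately show ?case using start_nonpos start_supergrad start_slope by auto
next
  case (Suc p)
  then obtain \<delta> g where s: "st p = Some (\<delta>, g)" "f \<delta> < 0" "g < 0" "supergrad f \<delta> g" by auto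
  obtain \<delta>' x' where s': "st (Suc p) = Some (\<delta>', - dotp m d x')" "x' \<in> minimizers \<delta>'" "f \<delta>' \<le> 0"
    using run_step_SomeE[OF s] by blast
  have "f \<delta>' \<noteq> 0" using assms(1) Suc.prems s'(1) unfolding active_upto_def by fastforce
  moreover have "0 < dotp m d x'" using s'(2) minimizers_subset denom_pos by blast
  ultimately show ?case using s' supergrad_minimizer by auto
qed

lemma active_trajectory:
  assumes "active_upto N"
  obtains \<delta> X where "trajectory N \<delta> X"
proof -
  define \<delta> where "\<delta> p = fst (the (st p))" for p
  define X where "X p = (SOME x. x \<in> minimizers (\<delta> p) \<and> snd (the (st p)) = - dotp m d x)" for p
  have state: "st p = Some (\<delta> p, - dotp m d (X p)) \<and> X p \<in> minimizers (\<delta> p) \<and> f (\<delta> p) < 0"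
    if p: "0 < p" "p \<le> N" for p
  proof -
    obtain \<delta>' g x where s: "st p = Some (\<delta>', g)" "f \<delta>' < 0" "x \<in> minimizers \<delta>'" "g = - dotp m d x"
      using active_state[OF assms p(2)] p(1) by blast
    have "X p \<in> minimizers (\<delta> p) \<and> snd (the (st p)) = - dotp m d (X p)"
      unfolding X_def \<delta>_def by (rule someI[of _ x]) (use s in simp)
    then show ?thesis using s unfolding \<delta>_def by simp
  qed
  have "\<delta> (Suc p) \<le> ratio (X p) \<and>
      (dotp m d (X (Suc p)) \<le> dotp m d (X p) / 2 \<or> 2 * ratio (X p) - \<delta> p \<le> opt_ratio)"
    if p: "0 < p" "p < N" for p
  proof -
    have s: "st p = Some (\<delta> p, - dotp m d (X p))" "X p \<in> minimizers (\<delta> p)" "f (\<delta> p) < 0"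
      using state p by auto
    have "- dotp m d (X p) < 0" using s(2) minimizers_subset denom_pos by force
    then obtain \<delta>' x' where s': "st (Suc p) = Some (\<delta>', - dotp m d x')"
      "\<delta>' \<le> ratio (X p)" "- dotp m d (X p) < - 2 * dotp m d x' \<or> 2 * ratio (X p) - \<delta> p \<le> opt_ratio"
      using run_step_SomeE[OF s(1,3) _ supergrad_minimizer[OF s(2)]]
      unfolding newton_point_minimizer[OF s(2)] by blast
    moreover have "st (Suc p) = Some (\<delta> (Suc p), - dotp m d (X (Suc p)))" using state p by simp
    ultimately show ?thesis by auto
  qed
  moreover have "X p \<in> minimizers (\<delta> p) \<and> opt_ratio < \<delta> p" if "0 < p" "p \<le> N" for p
    using state[OF that] fval_neg_iff by blast
  ultimately have "trajectory N \<delta> X" unfolding trajectory_def by blast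
  then show thesis by (rule that)
qed

lemma active_upto_bound: "active_upto N \<Longrightarrow> real N \<le> 16 * (real m * ln (real m) + 1) + 2"
  by (erule active_trajectory) (rule trajectory_length_bound)

lemma root_reached_or_active:
  "(\<exists>k\<le>n. (\<forall>j\<le>k. st j \<noteq> None) \<and> (\<exists>s. st k = Some s \<and> f (fst s) = 0)) \<or> active_upto n"
proof (induction n)
  case 0
  have "st 0 = Some (\<delta>1, g1)" using run unfolding lanD_run_def by simp
  then show ?case unfolding active_upto_def by (cases "f \<delta>1 = 0") auto
next
  case (Suc n)
  show ?case
  proof (cases "active_upto n")
    case True
    then obtain \<delta> g where "st n = Some (\<delta>, g)" "f \<delta> < 0" "g < 0" "supergrad f \<delta> g"
      using active_state by blast
    then obtain \<delta>' g' where s: "st (Suc n) = Some (\<delta>', g')" by (blast elim: run_step_SomeE)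
    have "\<forall>j\<le>n. st j \<noteq> None" using True unfolding active_upto_def by fastforce
    then have "\<forall>j\<le>Suc n. st j \<noteq> None" using s le_Suc_eq by auto
    moreover have "active_upto (Suc n) \<longleftrightarrow> f \<delta>' \<noteq> 0"
      using True s unfolding active_upto_def le_Suc_eq by auto
    ultimately show ?thesis using s by (cases "f \<delta>' = 0") auto
  next
    case False
    then show ?thesis using Suc.IH le_SucI by blast
  qed
qed

lemma root_reached:
  obtains k where "real k \<le> 16 * (real m * ln (real m) + 1) + 3"
    and "\<forall>j\<le>k. st j \<noteq> None" and "\<exists>s. st k = Some s \<and> f (fst s) = 0"
proof -
  define bound where "bound = 16 * (real m * ln (real m) + 1)"
  have "0 \<le> bound" using dim_pos unfolding bound_def by simp
  define n where "n = nat \<lfloor>bound\<rfloor> + 3"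
  have "real n = of_int \<lfloor>bound\<rfloor> + 3" unfolding n_def using \<open>0 \<le> bound\<close> by simp
  then have n: "bound + 2 < real n" "real n \<le> bound + 3"
    using real_of_int_floor_gt_diff_one[of bound] of_int_floor_le[of bound] by linarith+
  have "\<not> active_upto n"
  proof
    assume "active_upto n"
    then have "real n \<le> bound + 2" unfolding bound_def by (rule active_upto_bound)
    with n(1) show False by linarith
  qed
  then obtain k where "k \<le> n" "\<forall>j\<le>k. st j \<noteq> None" "\<exists>s. st k = Some s \<and> f (fst s) = 0"
    using root_reached_or_active by blast
  moreover have "real k \<le> bound + 3" using \<open>k \<le> n\<close> n(2) by linarith
  ultimately show thesis using that unfolding bound_def by blast
qed

end

theorem theorem3p6:
  "\<exists>C::real. \<forall>m c d D \<delta>1 g1 st.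
     D \<subseteq> bin_cube m \<and> D \<noteq> {} \<and> (\<forall>x\<in>D. dotp m d x > 0) \<and>
     fval m c d D \<delta>1 \<le> 0 \<and> supergrad (fval m c d D) \<delta>1 g1 \<and> g1 < 0 \<and>
     lanD_run m c d D \<delta>1 g1 st
     \<longrightarrow> (\<exists>k. real (k + 1) \<le> C * (real m * ln (real m) + 1) \<and>
              (\<forall>j\<le>k. st j \<noteq> None) \<and>
              (\<exists>s. st k = Some s \<and> fval m c d D (fst s) = 0))"
proof (rule exI[of _ 20], intro allI impI, elim conjE)
  fix m c d D \<delta>1 g1 st
  assume "D \<subseteq> bin_cube m" "D \<noteq> {}" "\<forall>x\<in>D. dotp m d x > 0"
    "fval m c d D \<delta>1 \<le> 0" "supergrad (fval m c d D) \<delta>1 g1" "g1 < 0" "lanD_run m c d D \<delta>1 g1 st"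
  then interpret lanD_execution m c d D \<delta>1 g1 st
    by unfold_locales auto
  obtain k where k: "real k \<le> 16 * (real m * ln (real m) + 1) + 3"
    "\<forall>j\<le>k. st j \<noteq> None" "\<exists>s. st k = Some s \<and> f (fst s) = 0"
    by (rule root_reached)
  have "0 \<le> real m * ln (real m)" using dim_pos by simp
  then have "real (k + 1) \<le> 20 * (real m * ln (real m) + 1)" using k(1) by simp
  then show "\<exists>k. real (k + 1) \<le> 20 * (real m * ln (real m) + 1) \<and>
      (\<forall>j\<le>k. st j \<noteq> None) \<and> (\<exists>s. st k = Some s \<and> f (fst s) = 0)"
    using k(2,3) by blast
qed

end
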